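(* Let $\mathbb{H}$ be a reproducing kernel Hilbert space with inner product $\langle\cdot,\cdot\rangle$ and feature map $\phi$, and let $(X,A,Y)$ be jointly distributed with $Y=\langle\phi(X),y\rangle$ and $A=\langle\phi(X),a\rangle$ for some nonzero $y,a\in\mathbb{H}$, with $\operatorname{Var}(Y),\operatorname{Var}(A)>0$; let $\rho_{YA}$ be the correlation coefficient of $Y$ and $A$. Let $c\in[0,\rho_{YA}^2\operatorname{Var}(A)]$ and $\alpha:=c/\operatorname{Var}(A)$. Then every (possibly randomized) representation $Z=g(X)$ with $\operatorname{Var}\mathbb{E}[A\mid Z]\le c$ satisfies $$\operatorname{Var}\mathbb{E}[Y\mid Z]\le \operatorname{Var}(Y)\Big(2|\rho_{YA}|\sqrt{(1-\rho_{YA}^2)\alpha(1-\alpha)}+1-\alpha-\rho_{YA}^2+2\alpha\rho_{YA}^2\Big).$$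
   Context: A (possibly randomized) representation is $Z=g(X,S)$ for a measurable $g$ and auxiliary randomness $S$ independent of $(X,A,Y)$. $\phi(X)$ is assumed to have finite second moment in $\mathbb{H}$. *)

theory Defs
  imports "HOL-Probability.Probability"
begin

definition covariance :: "'a measure \<Rightarrow> ('a \<Rightarrow> real) \<Rightarrow> ('a \<Rightarrow> real) \<Rightarrow> real" where
  "covariance M U V =
     (\<integral>\<omega>. (U \<omega> - (\<integral>\<omega>'. U \<omega>' \<partial>M)) * (V \<omega> - (\<integral>\<omega>'. V \<omega>' \<partial>M)) \<partial>M)"

definition correlation :: "'a measure \<Rightarrow> ('a \<Rightarrow> real) \<Rightarrow> ('a \<Rightarrow> real) \<Rightarrow> real" where
  "correlation M U V =
     covariance M U V / (sqrt (prob_space.variance M U) * sqrt (prob_space.variance M V))"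

definition cond_exp_given :: "'a measure \<Rightarrow> ('a \<Rightarrow> 'z) \<Rightarrow> 'z measure \<Rightarrow> ('a \<Rightarrow> real) \<Rightarrow> ('a \<Rightarrow> real)" where
  "cond_exp_given M Z MZ f = real_cond_exp M (vimage_algebra (space M) Z MZ) f"

end

theory Submission
  imports Defs
begin

(*
  Let F be the sigma-algebra generated by Z, P = Var E[Y|F] and Q = Var E[A|F].  Splitting Y and A
  into their conditional expectations and the orthogonal residuals gives
    Cov(Y,A) = Cov(E[Y|F], E[A|F]) + E[(Y - E[Y|F]) (A - E[A|F])],
  and Cauchy-Schwarz on both terms yields |Cov(Y,A)| <= sqrt(P Q) + sqrt((Var Y - P)(Var A - Q)).
  With cos^2 t_Y = P / Var Y and cos^2 t_A = Q / Var A this reads |rho| <= cos (t_Y - t_A).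
  Since Q <= c = alpha Var A <= rho^2 Var A, we have t_A >= arccos (sqrt alpha) >= arccos |rho|,
  hence t_Y >= arccos (sqrt alpha) - arccos |rho| >= 0, and P / Var Y is at most the square of
  cos (arccos (sqrt alpha) - arccos |rho|), which expands to the stated bound.
*)

lemma arccos_sqrt:
  fixes t :: real
  assumes "0 \<le> t" "t \<le> 1"
  shows "cos (arccos (sqrt t)) = sqrt t" "sin (arccos (sqrt t)) = sqrt (1 - t)"
    and "0 \<le> arccos (sqrt t)" "arccos (sqrt t) \<le> pi / 2"
proof -
  have "0 \<le> sqrt t" "sqrt t \<le> 1"
    using assms by auto
  then have "-1 \<le> sqrt t"
    by linarith
  then show "cos (arccos (sqrt t)) = sqrt t" "sin (arccos (sqrt t)) = sqrt (1 - t)"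
    and "0 \<le> arccos (sqrt t)" "arccos (sqrt t) \<le> pi / 2"
    using assms arccos_lbound[of "sqrt t"] arccos_le_pi2[of "sqrt t"]
    by (auto simp: cos_arccos_abs sin_arccos_abs)
qed

lemma sqrt_mult_add_sqrt_mult_le_one:
  fixes x s :: real
  assumes "0 \<le> x" "x \<le> 1" "0 \<le> s" "s \<le> 1"
  shows "sqrt x * sqrt s + sqrt (1 - x) * sqrt (1 - s) \<le> 1"
  using arith_geo_mean_sqrt[of x s] arith_geo_mean_sqrt[of "1 - x" "1 - s"] assms
  by (simp add: real_sqrt_mult)

lemma sqrt_fraction_bound:
  fixes x s \<alpha> r :: real
  assumes x: "0 \<le> x" "x \<le> 1" and s: "0 \<le> s" "s \<le> 1"
    and s_le: "s \<le> \<alpha>" and \<alpha>_le: "\<alpha> \<le> r\<^sup>2" and "0 \<le> r" "r \<le> 1"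
    and r_le: "r \<le> sqrt x * sqrt s + sqrt (1 - x) * sqrt (1 - s)"
  shows "sqrt x \<le> sqrt \<alpha> * r + sqrt (1 - \<alpha>) * sqrt (1 - r\<^sup>2)"
proof -
  define A B where "A = arccos (sqrt x)" and "B = arccos (sqrt s)"
  note A = arccos_sqrt[OF x, folded A_def] and B = arccos_sqrt[OF s, folded B_def]
  have cos_AB: "cos (A - B) = sqrt x * sqrt s + sqrt (1 - x) * sqrt (1 - s)"
    by (simp add: cos_diff A B)
  have r2: "0 \<le> r\<^sup>2" "r\<^sup>2 \<le> 1"
    using \<open>0 \<le> r\<close> \<open>r \<le> 1\<close> by (auto simp: power_le_one)
  then have \<alpha>: "0 \<le> \<alpha>" "\<alpha> \<le> 1"
    using assms by linarith+
  define B\<^sub>0 T where "B\<^sub>0 = arccos (sqrt \<alpha>)" and "T = arccos (sqrt (r\<^sup>2))"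
  note B\<^sub>0 = arccos_sqrt[OF \<alpha>, folded B\<^sub>0_def] and T = arccos_sqrt[OF r2, folded T_def]
  have "cos T \<le> cos \<bar>A - B\<bar>"
    using T cos_AB r_le \<open>0 \<le> r\<close> by simp
  then have "\<bar>A - B\<bar> \<le> T"
    using cos_mono_le_eq[of T "\<bar>A - B\<bar>"] A B T by linarith
  have "sqrt s \<le> sqrt \<alpha>" "sqrt \<alpha> \<le> sqrt (r\<^sup>2)"
    using s_le \<alpha>_le by (blast intro: real_sqrt_le_mono)+
  moreover have "0 \<le> sqrt s" "sqrt (r\<^sup>2) \<le> 1"
    using s \<open>0 \<le> r\<close> \<open>r \<le> 1\<close> by simp_all
  ultimately have "B\<^sub>0 \<le> B" and "T \<le> B\<^sub>0"
    unfolding B\<^sub>0_def B_def T_def by (intro arccos_le_arccos; linarith)+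
  with \<open>\<bar>A - B\<bar> \<le> T\<close> have "cos A \<le> cos (B\<^sub>0 - T)"
    using cos_mono_le_eq[of A "B\<^sub>0 - T"] A B\<^sub>0 T by linarith
  also have "cos (B\<^sub>0 - T) = sqrt \<alpha> * r + sqrt (1 - \<alpha>) * sqrt (1 - r\<^sup>2)"
    using \<open>0 \<le> r\<close> by (simp add: cos_diff B\<^sub>0 T)
  finally show ?thesis
    using A by simp
qed

lemma fraction_bound:
  fixes x s \<alpha> r :: real
  assumes x: "0 \<le> x" "x \<le> 1" and s: "0 \<le> s" "s \<le> 1"
    and \<alpha>: "s \<le> \<alpha>" "\<alpha> \<le> r\<^sup>2" and "0 \<le> r"
    and r_le: "r \<le> sqrt x * sqrt s + sqrt (1 - x) * sqrt (1 - s)"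
  shows "x \<le> 2 * r * sqrt ((1 - r\<^sup>2) * \<alpha> * (1 - \<alpha>)) + 1 - \<alpha> - r\<^sup>2 + 2 * \<alpha> * r\<^sup>2"
proof -
  have "r \<le> 1"
    using r_le sqrt_mult_add_sqrt_mult_le_one[OF x s] by linarith
  then have r2: "r\<^sup>2 \<le> 1"
    using \<open>0 \<le> r\<close> by (simp add: power_le_one)
  have "x = (sqrt x)\<^sup>2"
    using x by simp
  also have "\<dots> \<le> (sqrt \<alpha> * r + sqrt (1 - \<alpha>) * sqrt (1 - r\<^sup>2))\<^sup>2"
    by (rule power_mono[OF sqrt_fraction_bound[OF x s \<alpha> \<open>0 \<le> r\<close> \<open>r \<le> 1\<close> r_le]]) (simp add: x)
  also have "\<dots> = 2 * r * sqrt ((1 - r\<^sup>2) * \<alpha> * (1 - \<alpha>)) + 1 - \<alpha> - r\<^sup>2 + 2 * \<alpha> * r\<^sup>2"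
  proof -
    have "0 \<le> \<alpha>" "\<alpha> \<le> 1"
      using assms r2 by linarith+
    moreover have "sqrt ((1 - r\<^sup>2) * \<alpha> * (1 - \<alpha>)) = sqrt \<alpha> * sqrt (1 - \<alpha>) * sqrt (1 - r\<^sup>2)"
      by (simp add: real_sqrt_mult)
    ultimately show ?thesis
      using r2 by (simp add: power2_sum power_mult_distrib algebra_simps)
  qed
  finally show ?thesis .
qed

lemma explained_variance_bound:
  fixes VY VA P Q c cv \<rho> :: real
  assumes VY: "0 < VY" and VA: "0 < VA" and P: "0 \<le> P" "P \<le> VY" and Q: "0 \<le> Q" "Q \<le> VA"
    and c: "Q \<le> c" "c \<le> \<rho>\<^sup>2 * VA" and \<rho>_def: "\<rho> = cv / (sqrt VY * sqrt VA)"
    and cv_le: "\<bar>cv\<bar> \<le> sqrt (P * Q) + sqrt ((VY - P) * (VA - Q))"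
  shows "P \<le> VY * (2 * \<bar>\<rho>\<bar> * sqrt ((1 - \<rho>\<^sup>2) * (c / VA) * (1 - c / VA))
                    + 1 - c / VA - \<rho>\<^sup>2 + 2 * (c / VA) * \<rho>\<^sup>2)"
proof -
  have "\<bar>\<rho>\<bar> = \<bar>cv\<bar> / (sqrt VY * sqrt VA)"
    using VY VA by (simp add: \<rho>_def abs_divide abs_mult)
  also have "\<dots> \<le> (sqrt (P * Q) + sqrt ((VY - P) * (VA - Q))) / (sqrt VY * sqrt VA)"
    using cv_le VY VA by (simp add: divide_right_mono)
  also have "\<dots> = sqrt (P / VY) * sqrt (Q / VA) + sqrt (1 - P / VY) * sqrt (1 - Q / VA)"
  proof -
    have "1 - P / VY = (VY - P) / VY" "1 - Q / VA = (VA - Q) / VA"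
      using VY VA by (simp_all add: field_simps)
    then show ?thesis
      using VY VA by (simp add: real_sqrt_mult real_sqrt_divide add_divide_distrib)
  qed
  finally have "P / VY \<le> 2 * \<bar>\<rho>\<bar> * sqrt ((1 - \<bar>\<rho>\<bar>\<^sup>2) * (c / VA) * (1 - c / VA))
                    + 1 - c / VA - \<bar>\<rho>\<bar>\<^sup>2 + 2 * (c / VA) * \<bar>\<rho>\<bar>\<^sup>2"
    using VY VA P Q c by (intro fraction_bound) (simp_all add: divide_right_mono pos_divide_le_eq)
  then show ?thesis
    using VY by (simp add: pos_divide_le_eq mult.commute)
qed

lemma quadratic_nonneg_imp_discriminant_le:
  fixes U V W :: real
  assumes nonneg: "\<And>t. 0 \<le> t\<^sup>2 * U - 2 * t * W + V" and "0 \<le> U"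
  shows "W\<^sup>2 \<le> U * V"
proof (cases "U = 0")
  case True
  have "W = 0"
  proof (rule ccontr)
    assume "W \<noteq> 0"
    have "0 \<le> ((V + 1) / (2 * W))\<^sup>2 * U - 2 * ((V + 1) / (2 * W)) * W + V"
      by (rule nonneg)
    also have "\<dots> = -1"
      using True \<open>W \<noteq> 0\<close> by (simp add: field_simps)
    finally show False
      by simp
  qed
  with True show ?thesis
    by simp
next
  case False
  with \<open>0 \<le> U\<close> have "0 < U"
    by simp
  have "0 \<le> (W / U)\<^sup>2 * U - 2 * (W / U) * W + V"
    by (rule nonneg)
  also have "\<dots> = V - W\<^sup>2 / U"
    using \<open>0 < U\<close> by (simp add: field_simps power2_eq_square)
  finally show ?thesis
    using \<open>0 < U\<close> by (simp add: field_simps)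
qed

lemma integrable_mult_of_square_integrable:
  fixes u v :: "'a \<Rightarrow> real"
  assumes [measurable]: "u \<in> borel_measurable M" "v \<in> borel_measurable M"
    and "integrable M (\<lambda>x. (u x)\<^sup>2)" "integrable M (\<lambda>x. (v x)\<^sup>2)"
  shows "integrable M (\<lambda>x. u x * v x)"
proof (rule Bochner_Integration.integrable_bound)
  show "integrable M (\<lambda>x. (u x)\<^sup>2 + (v x)\<^sup>2)"
    using assms by simp
  show "AE x in M. norm (u x * v x) \<le> norm ((u x)\<^sup>2 + (v x)\<^sup>2)"
  proof (rule AE_I2)
    fix x
    have "\<bar>u x * v x\<bar> \<le> 2 * \<bar>u x\<bar> * \<bar>v x\<bar>"
      by (simp add: abs_mult)
    also have "\<dots> \<le> (u x)\<^sup>2 + (v x)\<^sup>2"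
      using sum_squares_bound[of "\<bar>u x\<bar>" "\<bar>v x\<bar>"] by simp
    finally show "norm (u x * v x) \<le> norm ((u x)\<^sup>2 + (v x)\<^sup>2)"
      by simp
  qed
qed simp

lemma square_integrable_diff:
  fixes u v :: "'a \<Rightarrow> real"
  assumes [measurable]: "u \<in> borel_measurable M" "v \<in> borel_measurable M"
    and "integrable M (\<lambda>x. (u x)\<^sup>2)" "integrable M (\<lambda>x. (v x)\<^sup>2)"
  shows "integrable M (\<lambda>x. (u x - v x)\<^sup>2)"
proof -
  have "integrable M (\<lambda>x. (u x)\<^sup>2 + (v x)\<^sup>2 - 2 * (u x * v x))"
    using assms integrable_mult_of_square_integrable[of u M v] by simp
  then show ?thesis
    by (simp add: power2_diff mult.assoc)
qed

lemma abs_integral_mult_le: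
  fixes u v :: "'a \<Rightarrow> real"
  assumes [measurable]: "u \<in> borel_measurable M" "v \<in> borel_measurable M"
    and u2: "integrable M (\<lambda>x. (u x)\<^sup>2)" and v2: "integrable M (\<lambda>x. (v x)\<^sup>2)"
  shows "\<bar>\<integral>x. u x * v x \<partial>M\<bar> \<le> sqrt (\<integral>x. (u x)\<^sup>2 \<partial>M) * sqrt (\<integral>x. (v x)\<^sup>2 \<partial>M)"
proof -
  have uv: "integrable M (\<lambda>x. u x * v x)"
    using integrable_mult_of_square_integrable[OF assms] .
  have "(\<integral>x. u x * v x \<partial>M)\<^sup>2 \<le> (\<integral>x. (u x)\<^sup>2 \<partial>M) * (\<integral>x. (v x)\<^sup>2 \<partial>M)"
  proof (rule quadratic_nonneg_imp_discriminant_le)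
    fix t :: real
    have "0 \<le> (\<integral>x. (t * u x - v x)\<^sup>2 \<partial>M)"
      by simp
    also have "\<dots> = (\<integral>x. t\<^sup>2 * (u x)\<^sup>2 - 2 * t * (u x * v x) + (v x)\<^sup>2 \<partial>M)"
      by (simp add: power2_diff power_mult_distrib algebra_simps)
    also have "\<dots> = t\<^sup>2 * (\<integral>x. (u x)\<^sup>2 \<partial>M) - 2 * t * (\<integral>x. u x * v x \<partial>M) + (\<integral>x. (v x)\<^sup>2 \<partial>M)"
      using u2 v2 uv by simp
    finally show "0 \<le> t\<^sup>2 * (\<integral>x. (u x)\<^sup>2 \<partial>M) - 2 * t * (\<integral>x. u x * v x \<partial>M) + (\<integral>x. (v x)\<^sup>2 \<partial>M)" .
  qed simp
  then show ?thesis
    by (metis real_sqrt_abs real_sqrt_le_mono real_sqrt_mult)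
qed

lemma subalgebra_vimage_algebra:
  assumes "Z \<in> measurable M N"
  shows "subalgebra M (vimage_algebra (space M) Z N)"
  unfolding subalgebra_def
proof
  show "space (vimage_algebra (space M) Z N) = space M"
    by simp
  show "sets (vimage_algebra (space M) Z N) \<subseteq> sets M"
    using assms measurable_space[OF assms]
    by (auto simp: sets_vimage_algebra2 intro: measurable_sets)
qed

lemma borel_measurable_inner_const:
  fixes f :: "'a \<Rightarrow> 'h::real_inner"
  assumes "f \<in> borel_measurable M"
  shows "(\<lambda>x. inner (f x) b) \<in> borel_measurable M"
  using assms by (intro borel_measurable_continuous_on[where f = "\<lambda>h. inner h b"])
    (simp_all add: continuous_on_inner continuous_on_id)

lemma square_integrable_inner:
  fixes f :: "'a \<Rightarrow> 'h::real_inner"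
  assumes [measurable]: "f \<in> borel_measurable M" and "integrable M (\<lambda>x. (norm (f x))\<^sup>2)"
  shows "integrable M (\<lambda>x. (inner (f x) b)\<^sup>2)"
proof (rule Bochner_Integration.integrable_bound)
  show "integrable M (\<lambda>x. (norm b)\<^sup>2 * (norm (f x))\<^sup>2)"
    using assms by simp
  show "(\<lambda>x. (inner (f x) b)\<^sup>2) \<in> borel_measurable M"
    by (intro borel_measurable_power borel_measurable_inner_const) fact
  show "AE x in M. norm ((inner (f x) b)\<^sup>2) \<le> norm ((norm b)\<^sup>2 * (norm (f x))\<^sup>2)"
  proof (rule AE_I2)
    fix x
    have "\<bar>inner (f x) b\<bar>\<^sup>2 \<le> (norm (f x) * norm b)\<^sup>2"
      by (rule power_mono) (auto simp: Cauchy_Schwarz_ineq2)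
    then show "norm ((inner (f x) b)\<^sup>2) \<le> norm ((norm b)\<^sup>2 * (norm (f x))\<^sup>2)"
      by (simp add: power_mult_distrib mult.commute)
  qed
qed

context finite_measure_subalgebra
begin

lemma square_integrable_real_cond_exp:
  fixes f :: "'a \<Rightarrow> real"
  assumes "f \<in> borel_measurable M" and "integrable M (\<lambda>x. (f x)\<^sup>2)"
  shows "integrable M (\<lambda>x. (real_cond_exp M F f x)\<^sup>2)"
  using integrable_convex_cond_exp[of f UNIV 0 0 "\<lambda>x. x\<^sup>2"] convex_power2 assms
    square_integrable_imp_integrable[OF assms]
  by auto

lemma integral_mult_real_cond_exp:
  fixes f h :: "'a \<Rightarrow> real"
  assumes [measurable]: "h \<in> borel_measurable F" "f \<in> borel_measurable M"
    and "integrable M (\<lambda>x. (h x)\<^sup>2)" "integrable M (\<lambda>x. (f x)\<^sup>2)"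
  shows "(\<integral>x. h x * real_cond_exp M F f x \<partial>M) = (\<integral>x. h x * f x \<partial>M)"
proof (rule real_cond_exp_intg(2))
  have "h \<in> borel_measurable M"
    by (rule measurable_from_subalg[OF subalg]) simp
  then show "integrable M (\<lambda>x. h x * f x)"
    using assms by (intro integrable_mult_of_square_integrable)
qed simp_all

end

context prob_space
begin

lemma covariance_eq:
  fixes u v :: "'a \<Rightarrow> real"
  assumes [measurable]: "u \<in> borel_measurable M" "v \<in> borel_measurable M"
    and u2: "integrable M (\<lambda>x. (u x)\<^sup>2)" and v2: "integrable M (\<lambda>x. (v x)\<^sup>2)"
  shows "covariance M u v = (\<integral>x. u x * v x \<partial>M) - expectation u * expectation v"
proof -
  have "integrable M u" "integrable M v" "integrable M (\<lambda>x. u x * v x)"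
    using u2 v2 by (auto intro: square_integrable_imp_integrable integrable_mult_of_square_integrable)
  then show ?thesis
    unfolding covariance_def by (simp add: algebra_simps prob_space)
qed

lemma variance_eq_covariance: "variance u = covariance M u u"
  by (simp add: covariance_def power2_eq_square)

lemma abs_covariance_le:
  fixes u v :: "'a \<Rightarrow> real"
  assumes [measurable]: "u \<in> borel_measurable M" "v \<in> borel_measurable M"
    and "integrable M (\<lambda>x. (u x)\<^sup>2)" "integrable M (\<lambda>x. (v x)\<^sup>2)"
  shows "\<bar>covariance M u v\<bar> \<le> sqrt (variance u) * sqrt (variance v)"
  unfolding covariance_def using assms
  by (intro abs_integral_mult_le square_integrable_diff) auto

lemma covariance_real_cond_exp_decomp:
  fixes f g :: "'a \<Rightarrow> real"
  assumes "subalgebra M F"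
    and [measurable]: "f \<in> borel_measurable M" "g \<in> borel_measurable M"
    and f2: "integrable M (\<lambda>x. (f x)\<^sup>2)" and g2: "integrable M (\<lambda>x. (g x)\<^sup>2)"
  defines "Cf \<equiv> real_cond_exp M F f" and "Cg \<equiv> real_cond_exp M F g"
  shows "covariance M f g = covariance M Cf Cg + (\<integral>x. (f x - Cf x) * (g x - Cg x) \<partial>M)"
proof -
  interpret finite_measure_subalgebra M F
    by unfold_locales fact
  have [measurable]: "Cf \<in> borel_measurable F" "Cg \<in> borel_measurable F"
    "Cf \<in> borel_measurable M" "Cg \<in> borel_measurable M"
    by (simp_all add: Cf_def Cg_def)
  have Cf2: "integrable M (\<lambda>x. (Cf x)\<^sup>2)" and Cg2: "integrable M (\<lambda>x. (Cg x)\<^sup>2)"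
    unfolding Cf_def Cg_def using f2 g2 by (simp_all add: square_integrable_real_cond_exp)
  have "expectation Cf = expectation f" "expectation Cg = expectation g"
    unfolding Cf_def Cg_def using f2 g2 by (simp_all add: square_integrable_imp_integrable real_cond_exp_int)
  moreover have "(\<integral>x. Cf x * g x \<partial>M) = (\<integral>x. Cf x * Cg x \<partial>M)"
    "(\<integral>x. Cg x * f x \<partial>M) = (\<integral>x. Cf x * Cg x \<partial>M)"
    using integral_mult_real_cond_exp[of Cf g] integral_mult_real_cond_exp[of Cg f] f2 g2 Cf2 Cg2
    by (simp_all add: Cf_def Cg_def mult.commute)
  moreover have "(\<integral>x. (f x - Cf x) * (g x - Cg x) \<partial>M)
      = (\<integral>x. f x * g x - Cf x * g x - Cg x * f x + Cf x * Cg x \<partial>M)"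
    by (simp add: algebra_simps)
  moreover have "integrable M (\<lambda>x. f x * g x)" "integrable M (\<lambda>x. Cf x * g x)"
    "integrable M (\<lambda>x. Cg x * f x)" "integrable M (\<lambda>x. Cf x * Cg x)"
    using f2 g2 Cf2 Cg2 by (auto intro: integrable_mult_of_square_integrable)
  ultimately show ?thesis
    using f2 g2 Cf2 Cg2 by (simp add: covariance_eq)
qed

lemma variance_real_cond_exp_decomp:
  fixes f :: "'a \<Rightarrow> real"
  assumes "subalgebra M F" "f \<in> borel_measurable M" "integrable M (\<lambda>x. (f x)\<^sup>2)"
  shows "variance f = variance (real_cond_exp M F f) + (\<integral>x. (f x - real_cond_exp M F f x)\<^sup>2 \<partial>M)"
  using covariance_real_cond_exp_decomp[OF assms(1,2,2,3,3)]
  unfolding variance_eq_covariance by (simp add: power2_eq_square)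

lemma variance_real_cond_exp_le:
  fixes f :: "'a \<Rightarrow> real"
  assumes "subalgebra M F" "f \<in> borel_measurable M" "integrable M (\<lambda>x. (f x)\<^sup>2)"
  shows "variance (real_cond_exp M F f) \<le> variance f"
  using variance_real_cond_exp_decomp[OF assms] by simp

lemma abs_covariance_le_real_cond_exp:
  fixes f g :: "'a \<Rightarrow> real"
  assumes subalg: "subalgebra M F"
    and [measurable]: "f \<in> borel_measurable M" "g \<in> borel_measurable M"
    and f2: "integrable M (\<lambda>x. (f x)\<^sup>2)" and g2: "integrable M (\<lambda>x. (g x)\<^sup>2)"
  defines "Cf \<equiv> real_cond_exp M F f" and "Cg \<equiv> real_cond_exp M F g"
  shows "\<bar>covariance M f g\<bar> \<le> sqrt (variance Cf * variance Cg)
                                + sqrt ((variance f - variance Cf) * (variance g - variance Cg))"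
proof -
  interpret finite_measure_subalgebra M F
    by unfold_locales fact
  have [measurable]: "Cf \<in> borel_measurable M" "Cg \<in> borel_measurable M"
    by (simp_all add: Cf_def Cg_def)
  have Cf2: "integrable M (\<lambda>x. (Cf x)\<^sup>2)" and Cg2: "integrable M (\<lambda>x. (Cg x)\<^sup>2)"
    unfolding Cf_def Cg_def using f2 g2 by (simp_all add: square_integrable_real_cond_exp)
  have "\<bar>covariance M Cf Cg\<bar> \<le> sqrt (variance Cf) * sqrt (variance Cg)"
    using Cf2 Cg2 by (intro abs_covariance_le) simp_all
  moreover have "\<bar>\<integral>x. (f x - Cf x) * (g x - Cg x) \<partial>M\<bar>
      \<le> sqrt (\<integral>x. (f x - Cf x)\<^sup>2 \<partial>M) * sqrt (\<integral>x. (g x - Cg x)\<^sup>2 \<partial>M)"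
    using f2 g2 Cf2 Cg2 by (intro abs_integral_mult_le square_integrable_diff) simp_all
  moreover have "(\<integral>x. (f x - Cf x)\<^sup>2 \<partial>M) = variance f - variance Cf"
    "(\<integral>x. (g x - Cg x)\<^sup>2 \<partial>M) = variance g - variance Cg"
    using variance_real_cond_exp_decomp[OF subalg] f2 g2 by (simp_all add: Cf_def Cg_def)
  ultimately show ?thesis
    using covariance_real_cond_exp_decomp[OF subalg, of f g] f2 g2
    unfolding Cf_def Cg_def real_sqrt_mult by simp
qed

end

theorem theorem5:
  fixes M :: "'w measure"
    and MX :: "'x measure" and MS :: "'s measure" and MZ :: "'z measure"
    and X :: "'w \<Rightarrow> 'x" and S :: "'w \<Rightarrow> 's"
    and \<phi> :: "'x \<Rightarrow> 'h :: {real_inner, complete_space}"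
    and y a :: 'h
    and g :: "'x \<times> 's \<Rightarrow> 'z"
    and Y A :: "'w \<Rightarrow> real"
    and c :: real
  assumes "prob_space M"
    and X_meas: "X \<in> measurable M MX"
    and phi_meas: "\<phi> \<in> borel_measurable MX"
    and second_moment: "integrable M (\<lambda>\<omega>. (norm (\<phi> (X \<omega>)))\<^sup>2)"
    and "y \<noteq> 0" and "a \<noteq> 0"
    and Y_def: "\<And>\<omega>. Y \<omega> = inner (\<phi> (X \<omega>)) y"
    and A_def: "\<And>\<omega>. A \<omega> = inner (\<phi> (X \<omega>)) a"
    and varY: "prob_space.variance M Y > 0"
    and varA: "prob_space.variance M A > 0"
    and c_nonneg: "0 \<le> c"
    and c_le: "c \<le> (correlation M Y A)\<^sup>2 * prob_space.variance M A"
    and S_meas: "S \<in> measurable M MS"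
    and S_indep: "prob_space.indep_set M (sets (vimage_algebra (space M) S MS))
                    (sets (vimage_algebra (space M) (\<lambda>\<omega>. (X \<omega>, A \<omega>, Y \<omega>))
                            (MX \<Otimes>\<^sub>M (borel \<Otimes>\<^sub>M borel))))"
    and g_meas: "g \<in> measurable (MX \<Otimes>\<^sub>M MS) MZ"
    and fair: "prob_space.variance M
                 (cond_exp_given M (\<lambda>\<omega>. g (X \<omega>, S \<omega>)) MZ A) \<le> c"
  shows "prob_space.variance M (cond_exp_given M (\<lambda>\<omega>. g (X \<omega>, S \<omega>)) MZ Y)
         \<le> prob_space.variance M Y *
            (2 * \<bar>correlation M Y A\<bar> *
               sqrt ((1 - (correlation M Y A)\<^sup>2) * (c / prob_space.variance M A)
                     * (1 - c / prob_space.variance M A))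
             + 1 - c / prob_space.variance M A - (correlation M Y A)\<^sup>2
             + 2 * (c / prob_space.variance M A) * (correlation M Y A)\<^sup>2)"
proof -
  interpret prob_space M by fact
  let ?F = "vimage_algebra (space M) (\<lambda>\<omega>. g (X \<omega>, S \<omega>)) MZ"
  have subalg: "subalgebra M ?F"
    using measurable_compose[OF measurable_Pair[OF X_meas S_meas] g_meas]
    by (intro subalgebra_vimage_algebra) simp
  have \<phi>X: "(\<lambda>\<omega>. \<phi> (X \<omega>)) \<in> borel_measurable M"
    using X_meas phi_meas by measurable
  have Y_eq: "Y = (\<lambda>\<omega>. inner (\<phi> (X \<omega>)) y)" and A_eq: "A = (\<lambda>\<omega>. inner (\<phi> (X \<omega>)) a)"
    using Y_def A_def by auto
  have Y: "Y \<in> borel_measurable M" "integrable M (\<lambda>\<omega>. (Y \<omega>)\<^sup>2)"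
    and A: "A \<in> borel_measurable M" "integrable M (\<lambda>\<omega>. (A \<omega>)\<^sup>2)"
    unfolding Y_eq A_eq using \<phi>X second_moment
    by (simp_all add: borel_measurable_inner_const square_integrable_inner)
  from explained_variance_bound[OF varY varA variance_positive variance_real_cond_exp_le[OF subalg Y]
      variance_positive variance_real_cond_exp_le[OF subalg A] fair[unfolded cond_exp_given_def]
      c_le correlation_def abs_covariance_le_real_cond_exp[OF subalg Y(1) A(1) Y(2) A(2)]]
  show ?thesis
    unfolding cond_exp_given_def .
qed

end
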